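(* For every prime $n\ge 5$, the regular origami $\big(A_n,(1,2,3),(1,2,3,\dots,n)\big)$, where $A_n$ is the alternating group on $\{1,\dots,n\}$, $x=(1,2,3)$ and $y=(1,2,\dots,n)$, has a totally non-congruence group as Veech group.
   Context: A regular origami $(G,x,y)$ is given by a finite group $G$ generated by two elements $x,y$: it is the translation surface obtained from unit squares indexed by the elements $g\in G$, where the right edge of square $g$ is glued to the left edge of square $gx$ and the top edge of square $g$ is glued to the bottom edge of square $gy$. Two regular origamis $(G,x,y)$, $(G',x',y')$ are identified if there is a group isomorphism $G\to G'$ with $x\mapsto x'$, $y\mapsto y'$. The group $\mathrm{SL}(2,\mathbb{Z})$ acts on regular origamis via $S\cdot(G,x,y)=(G,y^{-1},x)$ and $T\cdot(G,x,y)=(G,x,yx^{-1})$, where $S=\begin{pmatrix}0&-1\\1&0\end{pmatrix}$, $T=\begin{pmatrix}1&1\\0&1\end{pmatrix}$. The Veech group of a regular origami is its stabilizer under this action, a finite index subgroup of $\mathrm{SL}(2,\mathbb{Z})$. A finite index subgroup $\Gamma\le\mathrm{SL}(2,\mathbb{Z})$ is a totally non-congruence group if for every integer $n\ge1$ the reduction map $\mathrm{SL}(2,\mathbb{Z})\to\mathrm{SL}(2,\mathbb{Z}/n\mathbb{Z})$ restricted to $\Gamma$ is surjective. *)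

theory Defs
  imports "HOL-Analysis.Analysis" "HOL-Algebra.Sym_Groups" "HOL-Combinatorics.Cycles" "HOL-Number_Theory.Cong"
begin

definition mat2 :: "int \<Rightarrow> int \<Rightarrow> int \<Rightarrow> int \<Rightarrow> int^2^2" where
  "mat2 a b c d = (\<chi> i j. if i = 1 then (if j = 1 then a else b) else (if j = 1 then c else d))"

definition SL2Z :: "(int^2^2) set" where
  "SL2Z = {M. det M = 1}"

definition regular_origami :: "('g, 'b) monoid_scheme \<Rightarrow> 'g \<Rightarrow> 'g \<Rightarrow> bool" where
  "regular_origami G x y \<longleftrightarrow> group G \<and> x \<in> carrier G \<and> y \<in> carrier G
      \<and> generate G {x, y} = carrier G"

datatype sl2gen = GenS | GenT

fun gen_mat :: "sl2gen \<Rightarrow> int^2^2" where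
  "gen_mat GenS = mat2 0 (-1) 1 0"
| "gen_mat GenT = mat2 1 1 0 1"

fun word_mat :: "sl2gen list \<Rightarrow> int^2^2" where
  "word_mat [] = mat 1"
| "word_mat (g # w) = gen_mat g ** word_mat w"

fun gen_act :: "('g, 'b) monoid_scheme \<Rightarrow> sl2gen \<Rightarrow> 'g \<times> 'g \<Rightarrow> 'g \<times> 'g" where
  "gen_act G GenS (x, y) = (inv\<^bsub>G\<^esub> y, x)"
| "gen_act G GenT (x, y) = (x, y \<otimes>\<^bsub>G\<^esub> inv\<^bsub>G\<^esub> x)"

fun word_act :: "('g, 'b) monoid_scheme \<Rightarrow> sl2gen list \<Rightarrow> 'g \<times> 'g \<Rightarrow> 'g \<times> 'g" where
  "word_act G [] p = p"
| "word_act G (g # w) p = gen_act G g (word_act G w p)"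

definition origami_iso :: "('g, 'b) monoid_scheme \<Rightarrow> 'g \<times> 'g \<Rightarrow> 'g \<times> 'g \<Rightarrow> bool" where
  "origami_iso G p q \<longleftrightarrow> (\<exists>\<phi> \<in> iso G G. \<phi> (fst p) = fst q \<and> \<phi> (snd p) = snd q)"

text \<open>Veech group: the stabiliser of (G,x,y). Every element of SL(2,Z) is a product of S and T
  (S^4 = 1 and (ST)^6 = 1), so it suffices to consider positive words.\<close>
definition veech_group :: "('g, 'b) monoid_scheme \<Rightarrow> 'g \<Rightarrow> 'g \<Rightarrow> (int^2^2) set" where
  "veech_group G x y = {M \<in> SL2Z. \<exists>w. word_mat w = M \<and> origami_iso G (word_act G w (x, y)) (x, y)}"

text \<open>Gamma surjects onto SL(2,Z/NZ) for every N >= 1: every integer matrix whose determinant is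
  1 mod N agrees entrywise mod N with some element of Gamma.\<close>
definition totally_non_congruence :: "(int^2^2) set \<Rightarrow> bool" where
  "totally_non_congruence \<Gamma> \<longleftrightarrow> \<Gamma> \<subseteq> SL2Z \<and>
     (\<forall>N::nat. N \<ge> 1 \<longrightarrow> (\<forall>B::int^2^2. [det B = 1] (mod int N) \<longrightarrow>
        (\<exists>A \<in> \<Gamma>. \<forall>i j. [A $ i $ j = B $ i $ j] (mod int N))))"

end

theory Submission
  imports Defs
begin

text \<open>The words \<open>T\<^sup>3\<close>, \<open>S\<^sup>-\<^sup>1 T\<^sup>n S\<close>, \<open>T\<^sup>2 S\<^sup>-\<^sup>1 T\<^sup>n\<^sup>-\<^sup>2 S T\<close> and
  \<open>T S\<^sup>-\<^sup>1 T\<^sup>n S T\<^sup>2\<close> fix \<open>(x, y)\<close>, because \<open>x\<^sup>3 = 1\<close>, \<open>y\<^sup>n = 1\<close> and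
  \<open>y x\<^sup>-\<^sup>1\<close>, \<open>y x\<^sup>-\<^sup>2\<close> are cycles of lengths \<open>n - 2\<close> and \<open>n\<close>. Their matrices
  \<open>T\<^sup>3\<close>, \<open>L\<^sup>-\<^sup>n\<close>, \<open>T\<^sup>2 L\<^sup>2\<^sup>-\<^sup>n T\<close>, \<open>T L\<^sup>-\<^sup>n T\<^sup>2\<close> (with \<open>L\<close> the lower shear) lie in the
  Veech group. Modulo any \<open>k\<close>, the exponents \<open>t\<close> for which \<open>T\<^sup>t\<close> (resp. \<open>L\<^sup>t\<close>) is congruent to
  a product of these matrices form an ideal of \<open>\<int>/k\<close>. It contains \<open>3\<close>, and, after conjugating
  by a suitable lower shear, an exponent prime to \<open>3\<close>; so all upper shears are reached, and then
  \<open>2 - n\<close> and \<open>-n\<close> show that all lower shears are reached. Euclid's algorithm writes every matrix of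
  determinant \<open>1\<close> modulo \<open>k\<close> as a product of shears. Finally, \<open>x\<close> and \<open>y\<close> generate
  \<open>A\<^sub>n\<close>, since conjugating \<open>x\<close> by powers of \<open>y\<close> and then by the resulting \<open>3\<close>-cycles
  reaches every \<open>3\<close>-cycle.\<close>

lemma mat2_nth [simp]:
  "mat2 a b c d $ 1 $ 1 = a" "mat2 a b c d $ 1 $ 2 = b"
  "mat2 a b c d $ 2 $ 1 = c" "mat2 a b c d $ 2 $ 2 = d"
  by (simp_all add: mat2_def)

lemma mat2_eta: "M = mat2 (M$1$1) (M$1$2) (M$2$1) (M$2$2)"
  unfolding mat2_def by (simp add: vec_eq_iff forall_2)

lemma mat2_eq_iff:
  "mat2 a b c d = mat2 a' b' c' d' \<longleftrightarrow> a = a' \<and> b = b' \<and> c = c' \<and> d = d'"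
  by (metis mat2_nth)

lemma mat2_mult:
  "mat2 a b c d ** mat2 e f g h = mat2 (a*e + b*g) (a*f + b*h) (c*e + d*g) (c*f + d*h)"
  by (simp add: matrix_matrix_mult_def sum_2 mat2_def vec_eq_iff forall_2)

lemma mat_1_eq_mat2: "(mat 1 :: int^2^2) = mat2 1 0 0 1"
  by (subst mat2_eta) (simp add: mat_def)

lemma det_mat2: "det (mat2 a b c d) = a*d - b*c"
  by (simp add: det_2)

text \<open>For nilpotent \<open>N = mat2 a b c (-a)\<close>, i.e. \<open>a\<^sup>2 + b c = 0\<close>, this is \<open>exp (t N) = 1 + t N\<close>.\<close>
definition parabolic :: "int \<Rightarrow> int \<Rightarrow> int \<Rightarrow> int \<Rightarrow> int^2^2" where
  "parabolic a b c t = mat2 (1 + t*a) (t*b) (t*c) (1 - t*a)"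

abbreviation shear_up :: "int \<Rightarrow> int^2^2" where
  "shear_up t \<equiv> parabolic 0 1 0 t"

abbreviation shear_low :: "int \<Rightarrow> int^2^2" where
  "shear_low t \<equiv> parabolic 0 0 1 t"

lemma parabolic_add:
  assumes "a^2 + b*c = 0"
  shows "parabolic a b c s ** parabolic a b c t = parabolic a b c (s + t)"
proof -
  have "s*t*(a*a + b*c) = 0" using assms by (simp add: power2_eq_square)
  then show ?thesis
    by (simp add: parabolic_def mat2_mult mat2_eq_iff algebra_simps)
qed

lemma parabolic_zero: "parabolic a b c 0 = mat 1"
  by (simp add: parabolic_def mat_1_eq_mat2)

lemma shear_up_add: "shear_up s ** shear_up t = shear_up (s + t)"
  by (rule parabolic_add) simp

lemma shear_up_cancel: "shear_up (-a) ** (shear_up a ** X ** shear_up b) ** shear_up (-b) = X"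
proof -
  have "shear_up (-a) ** (shear_up a ** X ** shear_up b) ** shear_up (-b)
      = (shear_up (-a) ** shear_up a) ** X ** (shear_up b ** shear_up (-b))"
    by (simp add: matrix_mul_assoc)
  then show ?thesis
    by (simp add: shear_up_add parabolic_zero)
qed

lemma shear_up_conj_shear_low:
  "shear_up (-a) ** shear_low s ** shear_up a = parabolic (-a) (-(a^2)) 1 s"
  by (simp add: parabolic_def mat2_mult mat2_eq_iff algebra_simps power2_eq_square)

lemma shear_low_conj_parabolic:
  "shear_low c ** parabolic a b d s ** shear_low (-c) = parabolic (a - c*b) b (d + 2*c*a - c^2*b) s"
  by (simp add: parabolic_def mat2_mult mat2_eq_iff algebra_simps power2_eq_square)

definition mat_cong :: "int \<Rightarrow> int^2^2 \<Rightarrow> int^2^2 \<Rightarrow> bool" where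
  "mat_cong k A B \<longleftrightarrow> (\<forall>i j. [A $ i $ j = B $ i $ j] (mod k))"

lemma mat_cong_mat2:
  "mat_cong k (mat2 a b c d) (mat2 a' b' c' d') \<longleftrightarrow>
     [a = a'] (mod k) \<and> [b = b'] (mod k) \<and> [c = c'] (mod k) \<and> [d = d'] (mod k)"
  unfolding mat_cong_def by (simp add: forall_2)

lemma mat_cong_refl: "mat_cong k A A"
  unfolding mat_cong_def by simp

lemma mat_cong_trans: "mat_cong k A B \<Longrightarrow> mat_cong k B C \<Longrightarrow> mat_cong k A C"
  unfolding mat_cong_def using cong_trans by blast

lemma mat_cong_mult: "mat_cong k A B \<Longrightarrow> mat_cong k C D \<Longrightarrow> mat_cong k (A ** C) (B ** D)"
  unfolding mat_cong_def matrix_matrix_mult_def by (auto intro!: cong_sum cong_mult)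

lemma parabolic_cong_shear_up:
  assumes "k dvd t*a" and "k dvd t*c"
  shows "mat_cong k (parabolic a b c t) (shear_up (t*b))"
  using assms by (simp add: parabolic_def mat_cong_mat2 cong_iff_dvd_diff)

lemma parabolic_cong:
  "[s = t] (mod k) \<Longrightarrow> mat_cong k (parabolic a b c s) (parabolic a b c t)"
  by (simp add: parabolic_def mat_cong_mat2 cong_add cong_diff cong_mult)

section \<open>Reduction of matrix monoids modulo \<open>k\<close>\<close>

definition mod_submonoid :: "int \<Rightarrow> int set \<Rightarrow> bool" where
  "mod_submonoid k D \<longleftrightarrow> 0 \<in> D \<and> (\<forall>a\<in>D. \<forall>b\<in>D. a + b \<in> D)
     \<and> (\<forall>a\<in>D. \<forall>b. [a = b] (mod k) \<longrightarrow> b \<in> D)"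

text \<open>A submonoid of the finite group \<open>\<int>/k\<close> is a subgroup, hence an ideal.\<close>
lemma mod_submonoid_mult:
  assumes D: "mod_submonoid k D" and "k > 0" and a: "a \<in> D"
  shows "m * a \<in> D"
proof -
  have nat_mult: "int j * a \<in> D" for j :: nat
    using D a by (induction j) (auto simp: mod_submonoid_def distrib_right)
  have "[int (nat (m mod k)) * a = m * a] (mod k)"
    using \<open>k > 0\<close> by (simp add: cong_mult cong_mod_left)
  then show ?thesis
    using D nat_mult unfolding mod_submonoid_def by blast
qed

lemma mod_submonoid_coprime:
  assumes D: "mod_submonoid k D" and "k > 0" and "a \<in> D" "b \<in> D" "coprime a b"
  shows "1 \<in> D"
proof -
  obtain u v where "u * a + v * b = 1"
    using \<open>coprime a b\<close> by (metis bezout_int coprime_iff_gcd_eq_1 gcd.commute)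
  moreover have "u * a \<in> D" "v * b \<in> D"
    using mod_submonoid_mult[OF D \<open>k > 0\<close>] \<open>a \<in> D\<close> \<open>b \<in> D\<close> by auto
  ultimately show ?thesis
    using D unfolding mod_submonoid_def by metis
qed

locale matrix_monoid_mod =
  fixes \<Gamma> :: "(int^2^2) set" and k :: int
  assumes one_mem: "mat 1 \<in> \<Gamma>"
    and mult_mem: "A \<in> \<Gamma> \<Longrightarrow> B \<in> \<Gamma> \<Longrightarrow> A ** B \<in> \<Gamma>"
    and k_pos: "k > 0"
begin

definition cong_hull :: "(int^2^2) set" where
  "cong_hull = {B. \<exists>A\<in>\<Gamma>. mat_cong k A B}"

lemma cong_hull_mem: "A \<in> \<Gamma> \<Longrightarrow> A \<in> cong_hull"
  unfolding cong_hull_def using mat_cong_refl by blast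

lemma cong_hull_mult: "A \<in> cong_hull \<Longrightarrow> B \<in> cong_hull \<Longrightarrow> A ** B \<in> cong_hull"
  unfolding cong_hull_def using mult_mem mat_cong_mult by blast

lemma cong_hull_cong: "A \<in> cong_hull \<Longrightarrow> mat_cong k A B \<Longrightarrow> B \<in> cong_hull"
  unfolding cong_hull_def using mat_cong_trans by blast

definition parabolic_exps :: "int \<Rightarrow> int \<Rightarrow> int \<Rightarrow> int set" where
  "parabolic_exps a b c = {t. parabolic a b c t \<in> cong_hull}"

lemma mod_submonoid_parabolic_exps:
  assumes "a^2 + b*c = 0"
  shows "mod_submonoid k (parabolic_exps a b c)"
  unfolding mod_submonoid_def parabolic_exps_def
  using cong_hull_mem[OF one_mem] cong_hull_mult cong_hull_cong parabolic_cong
  by (simp add: parabolic_zero parabolic_add[OF assms, symmetric])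

lemma parabolic_exps_mult:
  "a^2 + b*c = 0 \<Longrightarrow> t \<in> parabolic_exps a b c \<Longrightarrow> m * t \<in> parabolic_exps a b c"
  using mod_submonoid_mult[OF mod_submonoid_parabolic_exps k_pos] .

lemma parabolic_exps_coprime:
  "a^2 + b*c = 0 \<Longrightarrow> s \<in> parabolic_exps a b c \<Longrightarrow> t \<in> parabolic_exps a b c \<Longrightarrow> coprime s t
    \<Longrightarrow> parabolic a b c u \<in> cong_hull"
  using mod_submonoid_coprime[OF mod_submonoid_parabolic_exps k_pos]
    parabolic_exps_mult[of a b c 1 u]
  by (simp add: parabolic_exps_def)

lemma upper_triangular_in_cong_hull:
  assumes shears: "\<And>t. shear_up t \<in> cong_hull" "\<And>t. shear_low t \<in> cong_hull"
    and det: "[a*d = 1] (mod k)"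
  shows "mat2 a b 0 d \<in> cong_hull"
proof -
  have e: "k dvd a*d - 1" "k dvd 1 - a*d"
    using det cong_iff_dvd_diff dvd_diff_commute by blast+
  have "shear_up a ** shear_low (-d) ** shear_up a ** (shear_up (-1) ** shear_low 1 ** shear_up (-1))
      ** shear_up (d*b) \<in> cong_hull"
    by (intro cong_hull_mult shears)
  also have "shear_up a ** shear_low (-d) ** shear_up a ** (shear_up (-1) ** shear_low 1 ** shear_up (-1))
      ** shear_up (d*b) = mat2 (a - a*(a*d - 1)) (b + (a*d - 1)*(1 - b*(a*d - 1))) (-(a*d - 1)) (d - d*b*(a*d - 1))"
    by (simp add: parabolic_def mat2_mult mat2_eq_iff algebra_simps)
  finally show ?thesis
    by (rule cong_hull_cong) (simp add: mat_cong_mat2 cong_iff_dvd_diff e)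
qed

text \<open>Euclid's algorithm on the lower left entry.\<close>
lemma mat2_in_cong_hull:
  assumes shears: "\<And>t. shear_up t \<in> cong_hull" "\<And>t. shear_low t \<in> cong_hull"
  shows "[a*d - b*c = 1] (mod k) \<Longrightarrow> mat2 a b c d \<in> cong_hull"
proof (induction "nat \<bar>c\<bar>" arbitrary: a b c d rule: less_induct)
  case less
  show ?case
  proof (cases "c = 0")
    case True
    then show ?thesis
      using upper_triangular_in_cong_hull[OF shears] less.prems by simp
  next
    case False
    define q r where "q = a div c" and "r = a mod c"
    have a: "a = q*c + r"
      by (simp add: q_def r_def)
    have "nat \<bar>r\<bar> < nat \<bar>c\<bar>"
      using False abs_mod_less r_def by fastforce
    moreover have "(-c)*(b - q*d) - (-d)*r = a*d - b*c"
      by (simp add: a algebra_simps)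
    ultimately have "mat2 (-c) (-d) r (b - q*d) \<in> cong_hull"
      using less by metis
    then have "shear_up q ** (shear_up 1 ** shear_low (-1) ** shear_up 1) ** mat2 (-c) (-d) r (b - q*d)
      \<in> cong_hull"
      by (intro cong_hull_mult shears)
    then show ?thesis
      by (simp add: parabolic_def mat2_mult a algebra_simps)
  qed
qed

theorem det_cong_one_in_cong_hull_if_shears:
  assumes "\<And>t. shear_up t \<in> cong_hull" "\<And>t. shear_low t \<in> cong_hull"
    and "[det B = 1] (mod k)"
  shows "B \<in> cong_hull"
  using mat2_in_cong_hull[OF assms(1,2), of "B$1$1" "B$2$2" "B$1$2" "B$2$1"] assms(3) mat2_eta[of B]
  by (simp add: det_2)

end

locale origami_monoid_mod = matrix_monoid_mod +
  fixes p :: int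
  assumes prime: "prime p" and p_ge_5: "p \<ge> 5"
    and up_3: "shear_up 3 \<in> \<Gamma>"
    and low_p: "shear_low (-p) \<in> \<Gamma>"
    and up_low_up_2_1: "shear_up 2 ** shear_low (-(p - 2)) ** shear_up 1 \<in> \<Gamma>"
    and up_low_up_1_2: "shear_up 1 ** shear_low (-p) ** shear_up 2 \<in> \<Gamma>"
begin

lemma shear_low_multiple_of_p: "shear_low (p * m) \<in> cong_hull"
  using parabolic_exps_mult[of 0 0 1 "-p" "-m"] cong_hull_mem[OF low_p]
  by (simp add: parabolic_exps_def mult.commute)

lemma not_3_dvd_p: "\<not> 3 dvd p"
  using primes_dvd_imp_eq[of 3 p] prime p_ge_5 by auto

lemma minus_p_in_parabolic_exps: "-p \<in> parabolic_exps (-2) (-4) 1"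
proof -
  have "shear_up (-3) \<in> cong_hull"
    using parabolic_exps_mult[of 0 1 0 3 "-1"] cong_hull_mem[OF up_3]
    by (simp add: parabolic_exps_def)
  then have "shear_up (-3) ** (shear_up 1 ** shear_low (-p) ** shear_up 2) \<in> cong_hull"
    using cong_hull_mem[OF up_low_up_1_2] by (rule cong_hull_mult)
  also have "shear_up (-3) ** (shear_up 1 ** shear_low (-p) ** shear_up 2) = parabolic (-2) (-4) 1 (-p)"
    using shear_up_conj_shear_low[of 2 "-p"] shear_up_add[of "-3" 1]
    by (simp add: matrix_mul_assoc)
  finally show ?thesis
    by (simp add: parabolic_exps_def)
qed

text \<open>Conjugating a power of \<open>T\<^sup>-\<^sup>2 L\<^sup>-\<^sup>p T\<^sup>2\<close> by a lower shear \<open>L\<^sup>c\<close> with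
  \<open>2 c \<equiv> 1 (mod 3\<^sup>e)\<close> gives a matrix congruent to an upper shear.\<close>
lemma shear_up_cofactor_in_cong_hull:
  assumes k: "k = 3^e * M"
  shows "shear_up (4*p*M) \<in> cong_hull"
proof -
  have "coprime p 3"
    using prime_imp_coprime[of 3 p] not_3_dvd_p by (simp add: coprime_commute)
  then have "coprime (2*p) (3^e)"
    by simp
  then obtain j where "[2*p*j = 1] (mod 3^e)"
    using cong_solve_coprime_int by blast
  then obtain q where q: "2*(p*j) - 1 = 3^e * q"
    by (metis cong_iff_dvd_diff dvd_def mult.assoc)
  let ?c = "p * j"
  have c: "2*?c - 1 = 3^e * q"
    using q by simp
  have "shear_low ?c \<in> cong_hull" "shear_low (-?c) \<in> cong_hull"
    using shear_low_multiple_of_p[of j] shear_low_multiple_of_p[of "-j"] by simp_all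
  moreover have "parabolic (-2) (-4) 1 (M * -p) \<in> cong_hull"
    using parabolic_exps_mult[of "-2" "-4" 1 "-p" M] minus_p_in_parabolic_exps
    by (simp add: parabolic_exps_def)
  ultimately have "shear_low ?c ** parabolic (-2) (-4) 1 (M * -p) ** shear_low (-?c) \<in> cong_hull"
    by (intro cong_hull_mult)
  also have "shear_low ?c ** parabolic (-2) (-4) 1 (M * -p) ** shear_low (-?c)
      = parabolic (2 * (2*?c - 1)) (-4) ((2*?c - 1)^2) (M * -p)"
    unfolding shear_low_conj_parabolic by (simp add: algebra_simps power2_eq_square)
  finally have hull: "parabolic (2 * (2*?c - 1)) (-4) ((2*?c - 1)^2) (M * -p) \<in> cong_hull" .
  have "mat_cong k (parabolic (2 * (2*?c - 1)) (-4) ((2*?c - 1)^2) (M * -p)) (shear_up (M * -p * -4))"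
  proof (rule parabolic_cong_shear_up)
    show "k dvd M * -p * (2 * (2*?c - 1))"
      unfolding c k by (rule dvdI[of _ _ "-2 * p * q"]) (simp add: algebra_simps)
    show "k dvd M * -p * (2*?c - 1)^2"
      unfolding c k by (rule dvdI[of _ _ "-p * q * 3^e * q"]) (simp add: algebra_simps power2_eq_square)
  qed
  then show ?thesis
    using cong_hull_cong[OF hull] by (simp add: ac_simps)
qed

lemma shear_up_in_cong_hull: "shear_up t \<in> cong_hull"
proof -
  have "k \<noteq> 0" "\<not> is_unit (3::int)"
    using k_pos by simp_all
  then obtain e M where k: "k = 3^e * M" and M: "\<not> 3 dvd M"
    using multiplicity_decompose'[of k 3] by metis
  have "4*p*M \<in> parabolic_exps 0 1 0"
    using shear_up_cofactor_in_cong_hull[OF k] by (simp add: parabolic_exps_def)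
  moreover have "3 \<in> parabolic_exps 0 1 0"
    using cong_hull_mem[OF up_3] by (simp add: parabolic_exps_def)
  moreover have "coprime 3 (4*p*M)"
    using M not_3_dvd_p by (simp add: prime_imp_coprime)
  ultimately show ?thesis
    using parabolic_exps_coprime[of 0 1 0 3 "4*p*M"] by (simp add: coprime_commute)
qed

lemma shear_low_in_cong_hull: "shear_low t \<in> cong_hull"
proof -
  have "\<not> p dvd p - 2"
  proof
    assume "p dvd p - 2"
    then have "p dvd 2"
      using dvd_diff[OF dvd_refl] by fastforce
    then show False
      using zdvd_imp_le p_ge_5 by fastforce
  qed
  then have "coprime (p - 2) p"
    using prime by (simp add: prime_imp_coprime coprime_commute)
  then have "coprime (-(p - 2)) (-p)"
    by (simp only: coprime_minus_left_iff coprime_minus_right_iff)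
  moreover have "shear_up (-2) ** (shear_up 2 ** shear_low (-(p - 2)) ** shear_up 1) ** shear_up (-1)
      \<in> cong_hull"
    using cong_hull_mult[OF cong_hull_mult[OF shear_up_in_cong_hull] shear_up_in_cong_hull]
      cong_hull_mem[OF up_low_up_2_1] by blast
  then have "-(p - 2) \<in> parabolic_exps 0 0 1"
    by (simp only: shear_up_cancel parabolic_exps_def mem_Collect_eq)
  moreover have "-p \<in> parabolic_exps 0 0 1"
    using cong_hull_mem[OF low_p] by (simp add: parabolic_exps_def)
  ultimately show ?thesis
    using parabolic_exps_coprime[of 0 0 1] by simp
qed

theorem det_cong_one_in_cong_hull: "[det B = 1] (mod k) \<Longrightarrow> B \<in> cong_hull"
  by (rule det_cong_one_in_cong_hull_if_shears[OF shear_up_in_cong_hull shear_low_in_cong_hull])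

end

lemma totally_non_congruence_if_origami_monoid:
  assumes "mat 1 \<in> \<Gamma>\<^sub>0" "\<And>A B. A \<in> \<Gamma>\<^sub>0 \<Longrightarrow> B \<in> \<Gamma>\<^sub>0 \<Longrightarrow> A ** B \<in> \<Gamma>\<^sub>0"
    and "\<Gamma>\<^sub>0 \<subseteq> \<Gamma>" "\<Gamma> \<subseteq> SL2Z"
    and "prime p" "p \<ge> 5"
    and "shear_up 3 \<in> \<Gamma>\<^sub>0" "shear_low (-p) \<in> \<Gamma>\<^sub>0"
    and "shear_up 2 ** shear_low (-(p - 2)) ** shear_up 1 \<in> \<Gamma>\<^sub>0"
    and "shear_up 1 ** shear_low (-p) ** shear_up 2 \<in> \<Gamma>\<^sub>0"
  shows "totally_non_congruence \<Gamma>"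
  unfolding totally_non_congruence_def
proof (intro conjI allI impI)
  fix N :: nat and B :: "int^2^2"
  assume "N \<ge> 1" and "[det B = 1] (mod int N)"
  interpret origami_monoid_mod \<Gamma>\<^sub>0 "int N" p
    using assms \<open>N \<ge> 1\<close> by unfold_locales auto
  have "B \<in> cong_hull"
    by (rule det_cong_one_in_cong_hull) fact
  then show "\<exists>A\<in>\<Gamma>. \<forall>i j. [A $ i $ j = B $ i $ j] (mod int N)"
    using assms(3) unfolding cong_hull_def mat_cong_def by blast
qed (use assms(4) in simp)

section \<open>The generators of the alternating group\<close>

lemma cycle_of_list_funpow_nth:
  assumes "distinct cs" and "i < length cs"
  shows "(cycle_of_list cs ^^ k) (cs ! i) = cs ! ((i + k) mod length cs)"
proof -
  have "map (cycle_of_list cs ^^ k) cs = rotate k cs"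
    using cyclic_rotation[OF assms(1)] .
  then have "(cycle_of_list cs ^^ k) (cs ! i) = rotate k cs ! i"
    by (metis assms(2) nth_map)
  then show ?thesis
    using assms(2) by (simp add: nth_rotate add.commute)
qed

lemma cycle_of_list_append:
  "cycle_of_list (xs @ [a]) \<circ> cycle_of_list (a # ys) = cycle_of_list (xs @ a # ys)"
  by (induction xs rule: induct_list012) (auto simp: fun_eq_iff)

lemma evenperm_cycle_of_list:
  assumes "distinct cs" and "odd (length cs)"
  shows "evenperm (cycle_of_list cs)"
  using swapidseq_ext_imp_swapidseq[OF swapidseq_ext_of_cycles[OF assms(1)]] assms(2)
    evenperm_unique by fastforce

lemma cycle3_apply:
  assumes "distinct [a, b, c]"
  shows "cycle_of_list [a, b, c] a = b" "cycle_of_list [a, b, c] b = c" "cycle_of_list [a, b, c] c = a"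
  using assms by (auto simp: Transposition.transpose_def)

lemma cycle3_apply_other: "i \<notin> {a, b, c} \<Longrightarrow> cycle_of_list [a, b, c] i = i"
  by (rule id_outside_supp) simp

lemma cycle3_square:
  assumes "distinct [a, b, c]"
  shows "cycle_of_list [a, b, c] \<circ> cycle_of_list [a, b, c] = cycle_of_list [a, c, b]"
proof
  fix i
  have "distinct [a, c, b]"
    using assms by auto
  then show "(cycle_of_list [a, b, c] \<circ> cycle_of_list [a, b, c]) i = cycle_of_list [a, c, b] i"
    using cycle3_apply[OF assms] cycle3_apply[of a c b] cycle3_apply_other[of i a b c]
      cycle3_apply_other[of i a c b]
    by (cases "i = a"; cases "i = b"; cases "i = c") auto
qed

lemma alt_group_pow: "p [^]\<^bsub>alt_group n\<^esub> k = p ^^ k"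
  by (induction k) (simp_all add: alt_group_one alt_group_mult funpow_Suc_right del: funpow.simps)

abbreviation tri :: "nat \<Rightarrow> nat" where
  "tri \<equiv> cycle_of_list [1, 2, 3]"

abbreviation rotation :: "nat \<Rightarrow> nat \<Rightarrow> nat" where
  "rotation n \<equiv> cycle_of_list [1..<n+1]"

locale odd_alt =
  fixes n :: nat
  assumes n_ge_5: "n \<ge> 5" and odd_n: "odd n"
begin

declare upt_Suc [simp del] cycle_of_list.simps [simp del]

lemma rotation_funpow:
  assumes "1 \<le> i" "i \<le> n"
  shows "(rotation n ^^ k) i = (i - 1 + k) mod n + 1"
  using cycle_of_list_funpow_nth[of "[1..<n+1]" "i - 1" k] assms by simp

lemma rotation_funpow_permutes: "(rotation n ^^ k) permutes {1..n}"
  using permutes_funpow cycle_permutes[of "[1..<n+1]"] by (simp add: atLeastLessThanSuc_atLeastAtMost)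

lemma rotation_funpow_n: "rotation n ^^ n = id"
  using cycle_is_id_root[of "[1..<n+1]"] by simp

lemma tri_cube: "tri ^^ 3 = id"
  using cycle_is_id_root[of "[1, 2, 3::nat]"] by (simp add: numeral_3_eq_3)

lemma tri_in_alt_group: "tri \<in> carrier (alt_group n)"
  using three_cycles_incl[of n] n_ge_5 by (force intro: exI[of _ "[1, 2, 3]"])

lemma rotation_in_alt_group: "rotation n \<in> carrier (alt_group n)"
  using evenperm_cycle_of_list[of "[1..<n+1]"] odd_n cycle_permutes[of "[1..<n+1]"]
  by (simp add: alt_group_carrier atLeastLessThanSuc_atLeastAtMost)

lemma inv_tri: "inv' tri = cycle_of_list [1, 3, 2]"
proof (rule inv_unique_comp)
  have square: "tri \<circ> tri = cycle_of_list [1, 3, 2]"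
    by (rule cycle3_square) simp
  have "tri \<circ> tri \<circ> tri = id"
    using tri_cube by (simp only: numeral_3_eq_3 funpow.simps o_id o_assoc)
  then show "tri \<circ> cycle_of_list [1, 3, 2] = id" "cycle_of_list [1, 3, 2] \<circ> tri = id"
    by (simp_all only: square[symmetric] o_assoc)
qed

text \<open>The two products below are obtained by conjugating the \<open>(n - 2)\<close>-cycle \<open>(3 4 \<dots> n)\<close>
  by \<open>tri\<close>.\<close>
lemma rotation_eq_tri_comp: "rotation n = tri \<circ> cycle_of_list (3 # [4..<n+1])"
proof -
  have "[1..<n+1] = 1 # 2 # 3 # [4..<n+1]"
    using n_ge_5 by (simp add: upt_conv_Cons eval_nat_numeral)
  then show ?thesis
    by (simp add: o_assoc cycle_of_list.simps)
qed

lemma rotation_comp_inv_tri: "rotation n \<circ> inv' tri = cycle_of_list (1 # [4..<n+1])"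
proof -
  have "map tri [4..<n+1] = [4..<n+1]"
  proof (rule map_idI)
    fix i
    assume "i \<in> set [4..<n+1]"
    then show "tri i = i"
      by (intro cycle3_apply_other) auto
  qed
  then have "map tri (3 # [4..<n+1]) = 1 # [4..<n+1]"
    by (simp add: Transposition.transpose_def cycle_of_list.simps)
  moreover have "bij tri"
    by (rule permutation_bijective[OF permutation_of_cycle])
  ultimately show ?thesis
    unfolding rotation_eq_tri_comp using conjugation_of_cycle[of "3 # [4..<n+1]" tri]
    by (simp add: o_assoc)
qed

lemma rotation_comp_inv_tri_funpow: "(rotation n \<circ> inv' tri) ^^ (n - 2) = id"
proof -
  have "length (1 # [4..<n+1]) = n - 2"
    using n_ge_5 by simp
  then show ?thesis
    unfolding rotation_comp_inv_tri using cycle_is_id_root[of "1 # [4..<n+1]"] by simp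
qed

lemma rotation_comp_inv_tri_square_funpow: "(rotation n \<circ> inv' tri \<circ> inv' tri) ^^ n = id"
proof -
  have "cycle_of_list (1 # [4..<n+1]) = cycle_of_list ([4..<n+1] @ [1])"
    using cycle_of_list_rotate_independent[of "1 # [4..<n+1]" 1] by simp
  then have "rotation n \<circ> inv' tri \<circ> inv' tri = cycle_of_list ([4..<n+1] @ [1, 3, 2])"
    using cycle_of_list_append[of "[4..<n+1]" 1 "[3, 2]"]
    unfolding rotation_comp_inv_tri unfolding inv_tri by simp
  moreover have "length ([4..<n+1] @ [1, 3, 2]) = n"
    using n_ge_5 by simp
  moreover have "cycle_of_list ([4..<n+1] @ [1, 3, 2]) ^^ length ([4..<n+1] @ [1, 3, 2]) = id"
    by (rule cycle_is_id_root) simp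
  ultimately show ?thesis
    by simp
qed

abbreviation generated :: "(nat \<Rightarrow> nat) set" where
  "generated \<equiv> generate (alt_group n) {tri, rotation n}"

lemma generators_in_alt_group: "{tri, rotation n} \<subseteq> carrier (alt_group n)"
  using tri_in_alt_group rotation_in_alt_group by simp

lemma generated_subset: "generated \<subseteq> carrier (alt_group n)"
  by (rule group.generate_incl[OF alt_group_is_group generators_in_alt_group])

lemma generated_comp: "g \<in> generated \<Longrightarrow> h \<in> generated \<Longrightarrow> g \<circ> h \<in> generated"
  using generate.eng[of g "alt_group n" "{tri, rotation n}" h] by (simp add: alt_group_mult)

lemma generated_inv: "g \<in> generated \<Longrightarrow> inv' g \<in> generated"
  using group.generate_m_inv_closed[OF alt_group_is_group generators_in_alt_group, of g]
    alt_group_inv_equality[of g n] generated_subset by auto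

lemma rotation_funpow_in_generated: "rotation n ^^ k \<in> generated"
proof (induction k)
  case 0
  then show ?case
    using generate.one[of "alt_group n" "{tri, rotation n}"] by (simp only: alt_group_one funpow.simps(1))
next
  case (Suc k)
  have "rotation n \<in> generated"
    by (rule generate.incl) simp
  then show ?case
    using generated_comp[OF _ Suc.IH] by (simp only: funpow.simps(2))
qed

lemma cycle_conj_in_generated:
  assumes "g \<in> generated" "distinct cs" "cycle_of_list cs \<in> generated"
  shows "cycle_of_list (map g cs) \<in> generated"
proof -
  have "g permutes {1..n}"
    using assms(1) generated_subset alt_group_carrier by blast
  then have "bij g"
    by (rule permutes_bij)
  then show ?thesis
    using conjugation_of_cycle[OF assms(2)] generated_comp[OF generated_comp[OF assms(1,3)]]
      generated_inv[OF assms(1)] by metis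
qed

lemma consecutive_cycle_in_generated:
  assumes "1 \<le> j" "j + 2 \<le> n"
  shows "cycle_of_list [j, j + 1, j + 2] \<in> generated"
proof -
  have "map (rotation n ^^ (j - 1)) [1, 2, 3] = [j, j + 1, j + 2]"
    using rotation_funpow[of 1 "j - 1"] rotation_funpow[of 2 "j - 1"] rotation_funpow[of 3 "j - 1"]
      assms n_ge_5 by auto
  moreover have "cycle_of_list (map (rotation n ^^ (j - 1)) [1, 2, 3]) \<in> generated"
    by (rule cycle_conj_in_generated[OF rotation_funpow_in_generated]) (auto intro: generate.incl)
  ultimately show ?thesis
    by simp
qed

lemma cycle_1_2_in_generated: "3 \<le> k \<Longrightarrow> k \<le> n \<Longrightarrow> cycle_of_list [1, 2, k] \<in> generated"
proof (induction k rule: nat_induct_at_least)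
  case base
  then show ?case
    by (auto intro: generate.incl)
next
  case (Suc k)
  define j where "j = (if k = 3 then 3 else k - 1)"
  have j: "1 \<le> j" "j + 2 \<le> n" "3 \<le> j"
    using Suc j_def n_ge_5 by auto
  have d: "distinct [j, j + 1, j + 2]"
    by simp
  have "cycle_of_list [j, j + 1, j + 2] k = Suc k"
  proof (cases "k = 3")
    case True
    then show ?thesis
      using cycle3_apply(1)[OF d] by (simp add: j_def)
  next
    case False
    then have "j + 1 = k" "j + 2 = Suc k"
      using Suc.hyps by (auto simp: j_def)
    then show ?thesis
      using cycle3_apply(2)[OF d] by simp
  qed
  moreover have "cycle_of_list [j, j + 1, j + 2] i = i" if "i \<in> {1, 2}" for i
    using j(3) that by (intro cycle3_apply_other) auto
  ultimately have "map (cycle_of_list [j, j + 1, j + 2]) [1, 2, k] = [1, 2, Suc k]"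
    by simp
  moreover have "cycle_of_list (map (cycle_of_list [j, j + 1, j + 2]) [1, 2, k]) \<in> generated"
    by (rule cycle_conj_in_generated[OF consecutive_cycle_in_generated[OF j(1,2)]])
      (use Suc in auto)
  ultimately show ?case
    by simp
qed

lemma cycle_2_in_generated:
  assumes "3 \<le> b" "b \<le> n" "3 \<le> c" "c \<le> n" "b \<noteq> c"
  shows "cycle_of_list [2, b, c] \<in> generated"
proof -
  have d: "distinct [1, 2, b]"
    using assms by auto
  then have "map (cycle_of_list [1, 2, b]) [1, 2, c] = [2, b, c]"
    using cycle3_apply[OF d] cycle3_apply_other[of c 1 2 b] assms by auto
  moreover have "cycle_of_list (map (cycle_of_list [1, 2, b]) [1, 2, c]) \<in> generated"
    by (rule cycle_conj_in_generated[OF cycle_1_2_in_generated _ cycle_1_2_in_generated])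
      (use assms in auto)
  ultimately show ?thesis
    by simp
qed

lemma cycle_1_in_generated:
  assumes "2 \<le> b" "b \<le> n" "2 \<le> c" "c \<le> n" "b \<noteq> c"
  shows "cycle_of_list [1, b, c] \<in> generated"
proof -
  consider "b = 2" | "c = 2" | "3 \<le> b" "3 \<le> c"
    using assms by linarith
  then show ?thesis
  proof cases
    case 1
    then show ?thesis
      using cycle_1_2_in_generated assms by auto
  next
    case 2
    have "cycle_of_list [1, 2, b] \<circ> cycle_of_list [1, 2, b] \<in> generated"
      using generated_comp cycle_1_2_in_generated assms 2 by auto
    moreover have "distinct [1, 2, b]"
      using assms 2 by auto
    ultimately show ?thesis
      using cycle3_square 2 by metis
  next
    case 3
    text \<open>Some \<open>e \<in> {3, 4, 5}\<close> differs from both \<open>b\<close> and \<open>c\<close>; this is where \<open>n \<ge> 5\<close> is needed.\<close>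
    define e :: nat where "e = (if 3 \<notin> {b, c} then 3 else if 4 \<notin> {b, c} then 4 else 5)"
    have e: "3 \<le> e" "e \<le> 5" "e \<noteq> b" "e \<noteq> c"
      unfolding e_def using assms by auto
    have d: "distinct [2, b, e]"
      using e 3 by auto
    then have "map (cycle_of_list [2, b, e]) [1, 2, c] = [1, b, c]"
      using cycle3_apply[OF d] cycle3_apply_other[of c 2 b e] cycle3_apply_other[of 1 2 b e] assms e 3
      by auto
    moreover have "cycle_of_list (map (cycle_of_list [2, b, e]) [1, 2, c]) \<in> generated"
      by (rule cycle_conj_in_generated[OF cycle_2_in_generated _ cycle_1_2_in_generated])
        (use assms e 3 n_ge_5 in auto)
    ultimately show ?thesis
      by simp
  qed
qed

lemma three_cycle_in_generated:
  assumes "set [a, b, c] \<subseteq> {1..n}" "distinct [a, b, c]"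
  shows "cycle_of_list [a, b, c] \<in> generated"
proof -
  define p where "p = rotation n ^^ (a - 1)"
  have "1 \<le> a" "a - 1 < n"
    using assms(1) by auto
  then have p1: "p 1 = a"
    using rotation_funpow[of 1 "a - 1"] n_ge_5 by (simp add: p_def)
  have perm: "p permutes {1..n}"
    unfolding p_def by (rule rotation_funpow_permutes)
  have inv_in: "inv' p i \<in> {1..n}" if "i \<in> {1..n}" for i
    using permutes_in_image[OF permutes_inv[OF perm]] that by simp
  have p_inv: "p (inv' p i) = i" for i
    using permutes_inverses(1)[OF perm] .
  have "inv' p b \<noteq> 1" "inv' p c \<noteq> 1" "inv' p b \<noteq> inv' p c"
    using p_inv[of b] p_inv[of c] p1 assms(2) by auto
  moreover have "cycle_of_list [1, inv' p b, inv' p c] \<in> generated"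
    using calculation inv_in[of b] inv_in[of c] assms(1) by (intro cycle_1_in_generated) auto
  moreover have "p \<in> generated"
    unfolding p_def by (rule rotation_funpow_in_generated)
  ultimately have "cycle_of_list (map p [1, inv' p b, inv' p c]) \<in> generated"
    using cycle_conj_in_generated[of p "[1, inv' p b, inv' p c]"] by simp
  then show ?thesis
    using p1 p_inv by simp
qed

theorem generate_tri_rotation: "generated = carrier (alt_group n)"
proof
  show "generated \<subseteq> carrier (alt_group n)"
    by (rule generated_subset)
  have "three_cycles n \<subseteq> generated"
  proof
    fix p
    assume "p \<in> three_cycles n"
    then obtain cs where cs: "p = cycle_of_list cs" "distinct cs" "length cs = 3" "set cs \<subseteq> {1..n}"
      by auto
    moreover have "cs = [cs ! 0, cs ! 1, cs ! 2]"
      using stupid_lemma[OF cs(3)] .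
    ultimately show "p \<in> generated"
      using three_cycle_in_generated[of "cs ! 0" "cs ! 1" "cs ! 2"] by metis
  qed
  then have "generate (alt_group n) (three_cycles n) \<subseteq> generated"
    by (rule group.generate_subgroup_incl[OF alt_group_is_group _
          group.generate_is_subgroup[OF alt_group_is_group generators_in_alt_group]])
  then show "carrier (alt_group n) \<subseteq> generated"
    unfolding alt_group_carrier_as_three_cycles .
qed

lemma alt_group_relations:
  "tri [^]\<^bsub>alt_group n\<^esub> (3::nat) = \<one>\<^bsub>alt_group n\<^esub>"
  "rotation n [^]\<^bsub>alt_group n\<^esub> n = \<one>\<^bsub>alt_group n\<^esub>"
  "(rotation n \<otimes>\<^bsub>alt_group n\<^esub> inv\<^bsub>alt_group n\<^esub> tri) [^]\<^bsub>alt_group n\<^esub> (n - 2) = \<one>\<^bsub>alt_group n\<^esub>"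
  "(rotation n \<otimes>\<^bsub>alt_group n\<^esub> inv\<^bsub>alt_group n\<^esub> tri \<otimes>\<^bsub>alt_group n\<^esub> inv\<^bsub>alt_group n\<^esub> tri)
     [^]\<^bsub>alt_group n\<^esub> n = \<one>\<^bsub>alt_group n\<^esub>"
  unfolding alt_group_inv_equality[OF tri_in_alt_group] alt_group_pow alt_group_mult alt_group_one
  using tri_cube rotation_funpow_n rotation_comp_inv_tri_funpow rotation_comp_inv_tri_square_funpow
  by simp_all

end

section \<open>Words in \<open>S\<close> and \<open>T\<close>\<close>

lemma word_act_append: "word_act G (v @ w) p = word_act G v (word_act G w p)"
  by (induction v) auto

lemma word_mat_append: "word_mat (v @ w) = word_mat v ** word_mat w"
  by (induction v) (auto simp: matrix_mul_assoc)

lemma det_word_mat: "det (word_mat w) = 1"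
proof (induction w)
  case Nil
  then show ?case
    by (simp add: det_I)
next
  case (Cons g w)
  then show ?case
    by (cases g) (simp_all add: det_mul det_mat2)
qed

definition up_word :: "nat \<Rightarrow> sl2gen list" where
  "up_word k = replicate k GenT"

text \<open>Since \<open>S\<^sup>4 = 1\<close>, this is the word \<open>S\<^sup>-\<^sup>1 T\<^sup>k S\<close>.\<close>
definition low_word :: "nat \<Rightarrow> sl2gen list" where
  "low_word k = [GenS, GenS, GenS] @ replicate k GenT @ [GenS]"

lemma word_mat_up_word: "word_mat (up_word k) = shear_up (int k)"
  by (induction k) (simp_all add: up_word_def parabolic_def mat_1_eq_mat2 mat2_mult add.commute)

lemma word_mat_low_word: "word_mat (low_word k) = shear_low (- int k)"
proof -
  have "word_mat (replicate k GenT) = shear_up (int k)"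
    using word_mat_up_word by (simp add: up_word_def)
  then show ?thesis
    by (simp add: low_word_def word_mat_append parabolic_def mat_1_eq_mat2 mat2_mult)
qed

context group
begin

lemma word_act_up_word:
  "a \<in> carrier G \<Longrightarrow> b \<in> carrier G \<Longrightarrow> word_act G (up_word k) (a, b) = (a, b \<otimes> inv a [^] k)"
  by (induction k) (simp_all add: up_word_def m_assoc)

lemma word_act_low_word:
  assumes "a \<in> carrier G" "b \<in> carrier G"
  shows "word_act G (low_word k) (a, b) = (a \<otimes> b [^] k, b)"
  using assms word_act_up_word[of "inv b" a k]
  by (simp add: low_word_def up_word_def word_act_append inv_mult_group)

lemma origami_words_stabilise:
  fixes n :: nat
  assumes x: "x \<in> carrier G" and y: "y \<in> carrier G"
    and rel_x: "x [^] (3::nat) = \<one>" and rel_y: "y [^] n = \<one>"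
    and rel_yx: "(y \<otimes> inv x) [^] (n - 2) = \<one>"
    and rel_yxx: "(y \<otimes> inv x \<otimes> inv x) [^] n = \<one>"
  shows "word_act G (up_word 3) (x, y) = (x, y)"
    and "word_act G (low_word n) (x, y) = (x, y)"
    and "word_act G (up_word 2 @ low_word (n - 2) @ up_word 1) (x, y) = (x, y)"
    and "word_act G (up_word 1 @ low_word n @ up_word 2) (x, y) = (x, y)"
proof -
  have ix: "inv x \<in> carrier G"
    using x by simp
  have y_inv_x_cube: "y \<otimes> inv x [^] (3::nat) = y"
    using x y rel_x by (simp add: nat_pow_inv)
  then show "word_act G (up_word 3) (x, y) = (x, y)" "word_act G (low_word n) (x, y) = (x, y)"
    using x y rel_y by (simp_all add: word_act_up_word word_act_low_word)
  from y_inv_x_cube have "y \<otimes> inv x \<otimes> inv x \<otimes> inv x = y"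
    using y ix by (simp add: numeral_3_eq_3 m_assoc)
  then show "word_act G (up_word 2 @ low_word (n - 2) @ up_word 1) (x, y) = (x, y)"
    and "word_act G (up_word 1 @ low_word n @ up_word 2) (x, y) = (x, y)"
    using x y ix rel_yx rel_yxx
    by (simp_all add: word_act_append word_act_up_word word_act_low_word numeral_2_eq_2 m_assoc)
qed

end

definition stabilising_matrices :: "('g, 'b) monoid_scheme \<Rightarrow> 'g \<Rightarrow> 'g \<Rightarrow> (int^2^2) set" where
  "stabilising_matrices G x y = {word_mat w | w. word_act G w (x, y) = (x, y)}"

lemma word_mat_in_stabilising_matrices:
  "word_act G w (x, y) = (x, y) \<Longrightarrow> word_mat w \<in> stabilising_matrices G x y"
  unfolding stabilising_matrices_def by blast

lemma mat_1_in_stabilising_matrices: "mat 1 \<in> stabilising_matrices G x y"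
  using word_mat_in_stabilising_matrices[of G "[]"] by simp

lemma stabilising_matrices_mult:
  assumes "A \<in> stabilising_matrices G x y" and "B \<in> stabilising_matrices G x y"
  shows "A ** B \<in> stabilising_matrices G x y"
proof -
  obtain v w where "A = word_mat v" "word_act G v (x, y) = (x, y)"
    "B = word_mat w" "word_act G w (x, y) = (x, y)"
    using assms unfolding stabilising_matrices_def by blast
  then show ?thesis
    using word_mat_in_stabilising_matrices[of G "v @ w"] by (simp add: word_act_append word_mat_append)
qed

lemma stabilising_matrices_subset_veech_group: "stabilising_matrices G x y \<subseteq> veech_group G x y"
proof
  fix M
  assume "M \<in> stabilising_matrices G x y"
  then obtain w where "M = word_mat w" "word_act G w (x, y) = (x, y)"
    unfolding stabilising_matrices_def by blast
  then show "M \<in> veech_group G x y"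
    using id_iso[of G] det_word_mat[of w] unfolding veech_group_def SL2Z_def origami_iso_def
    by (auto intro!: bexI[of _ id])
qed

lemma (in group) veech_group_totally_non_congruence:
  fixes n :: nat
  assumes "x \<in> carrier G" and "y \<in> carrier G"
    and "x [^] (3::nat) = \<one>" and "y [^] n = \<one>"
    and "(y \<otimes> inv x) [^] (n - 2) = \<one>"
    and "(y \<otimes> inv x \<otimes> inv x) [^] n = \<one>"
    and "prime n" and "n \<ge> 5"
  shows "totally_non_congruence (veech_group G x y)"
proof (rule totally_non_congruence_if_origami_monoid[of "stabilising_matrices G x y"])
  show "shear_up 3 \<in> stabilising_matrices G x y" "shear_low (- int n) \<in> stabilising_matrices G x y"
    "shear_up 2 ** shear_low (-(int n - 2)) ** shear_up 1 \<in> stabilising_matrices G x y"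
    "shear_up 1 ** shear_low (- int n) ** shear_up 2 \<in> stabilising_matrices G x y"
    using origami_words_stabilise[OF assms(1-6), THEN word_mat_in_stabilising_matrices] \<open>n \<ge> 5\<close>
    by (simp_all add: word_mat_append word_mat_up_word word_mat_low_word matrix_mul_assoc of_nat_diff)
  show "veech_group G x y \<subseteq> SL2Z"
    by (auto simp: veech_group_def)
  show "prime (int n)" "int n \<ge> 5"
    using assms(7,8) by simp_all
qed (simp_all add: mat_1_in_stabilising_matrices stabilising_matrices_mult
      stabilising_matrices_subset_veech_group)

theorem mainTheorem3:
  fixes n :: nat
  assumes "prime n" and "n \<ge> 5"
  shows "regular_origami (alt_group n) (cycle_of_list [1, 2, 3]) (cycle_of_list [1..<n+1])
    \<and> totally_non_congruence
        (veech_group (alt_group n) (cycle_of_list [1, 2, 3]) (cycle_of_list [1..<n+1]))"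
proof
  interpret odd_alt n
    using assms prime_odd_nat by unfold_locales auto
  interpret alt: group "alt_group n"
    by (rule alt_group_is_group)
  show "regular_origami (alt_group n) tri (rotation n)"
    unfolding regular_origami_def
    using alt.is_group tri_in_alt_group rotation_in_alt_group generate_tri_rotation by simp
  show "totally_non_congruence (veech_group (alt_group n) tri (rotation n))"
    using tri_in_alt_group rotation_in_alt_group alt_group_relations assms
    by (rule alt.veech_group_totally_non_congruence)
qed

end
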